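(* Let $(X,d,\preccurlyeq)$ be a preordered $s$-regular $b$-metric space and let $\mathcal F=\{f_\alpha\}_{\alpha\in\mathcal I}$, $\mathcal G=\{g_\alpha\}_{\alpha\in\mathcal I}$ ($\mathcal I$ nonempty) be families of self mappings of $X$. Suppose that for each $\alpha\in\mathcal I$ there are mappings $H_{t,\alpha}:X\to X$, $0\le t\le n$, with $$f_\alpha=H_{0,\alpha}\preccurlyeq H_{1,\alpha}\succcurlyeq H_{2,\alpha}\preccurlyeq\cdots\succcurlyeq H_{n,\alpha}=g_\alpha,$$ and write $\mathcal H_t=\{H_{t,\alpha}\}_{\alpha\in\mathcal I}$. Suppose $x_0\in\mathrm{ComFix}(\mathcal F)$ and: (i) for each $t$, $1\le t\le n$, the family $\mathcal H_t$ is concordantly isotone; (ii) for each odd $t$, $1\le t\le n$, for every chain $C\in\mathcal C^*_1(\mathcal H_t,\preccurlyeq)$ there exists $w\in X$ which is a common upper bound of the chains $H_{t,\alpha}(C)$, $\alpha\in\mathcal I$, and there exist $z\in X$, $\beta\in\mathcal I$ such that for all $\alpha\in\mathcal I$ and $i\in\mathbb N$, $H_{t,\alpha}(w)\succcurlyeq w\succcurlyeq H^i_{t,\beta}(z)$, and $d(H^i_{t,\alpha}(w),H^i_{t,\beta}(z))\to0$ as $i\to\infty$; (iii) for each even $t$, $1\le t\le n$, for every chain $C\in\mathcal C_1(\mathcal H_t,\preccurlyeq)$ there exists $w'\in X$ which is a common lower bound of the chains $H_{t,\alpha}(C)$, $\alpha\in\mathcal I$, and there exist $z'\in X$, $\gamma\in\mathcal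 I$ such that for all $\alpha\in\mathcal I$ and $i\in\mathbb N$, $H_{t,\alpha}(w')\preccurlyeq w'\preccurlyeq H^i_{t,\gamma}(z')$, and $d(H^i_{t,\alpha}(w'),H^i_{t,\gamma}(z'))\to0$ as $i\to\infty$. Then there exists a fence $x_0\preccurlyeq x_1\succcurlyeq x_2\preccurlyeq\cdots\succcurlyeq x_n$ such that for each odd $t$, $x_t\in\mathrm{ComFix}(\mathcal H_t)\cap O^*_X(x_{t-1})$ and $x_t$ is a maximal element of that set, and for each even $t$, $x_t\in\mathrm{ComFix}(\mathcal H_t)\cap O_X(x_{t-1})$ and $x_t$ is a minimal element of that set.
   Context: A $b$-metric space with coefficient $s\ge 1$ is a nonempty set $X$ with $d:X\times X\to[0,\infty)$ such that for all $x,y,z$: $d(x,y)=0$ iff $x=y$; $d(x,y)=d(y,x)$; $d(x,y)\le s[d(x,z)+d(z,y)]$. A preorder is a reflexive transitive relation $\preccurlyeq$; $x\succcurlyeq y$ means $y\preccurlyeq x$; $x\prec y$ means $x\preccurlyeq y$ and $x\ne y$. A preordered $s$-regular $b$-metric space $(X,d,\preccurlyeq)$ is a $b$-metric space with coefficient $s$ with a preorder such that $x\preccurlyeq y\preccurlyeq z$ implies $\max\{d(x,y),d(y,z)\}\le s^2d(x,z)$. For maps $F,G$, $F\preccurlyeq G$ means $F(x)\preccurlyeq G(x)$ for all $x$. A chain is a subset any two elements of which are comparable. $f^i$ is the $i$-th iterate. A family $\{f_\alpha\}_{\alpha\in\mathcal I}$ of self maps is concordantly isotone if for all $x,y$, $x\prec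 y$ implies $f_\alpha(x)\preccurlyeq f_\beta(y)$ for all $\alpha,\beta\in\mathcal I$. $O_X(x_0)=\{x:x\preccurlyeq x_0\}$, $O^*_X(x_0)=\{x:x\succcurlyeq x_0\}$. For a family $\mathcal F=\{f_\alpha\}$: $\mathcal C_1(\mathcal F,\preccurlyeq)$ is the set of chains $C\subset\bigcup_\alpha f_\alpha(X)$ with $f_\alpha(x)\preccurlyeq x$ for all $x\in C,\alpha$, and $x\prec y$ in $C$ implies $x\preccurlyeq f_\alpha(y)$ for all $\alpha$; $\mathcal C^*_1(\mathcal F,\preccurlyeq)$ is the set of chains $C\subset\bigcup_\alpha f_\alpha(X)$ with $f_\alpha(x)\succcurlyeq x$ for all $x\in C,\alpha$, and $x\prec y$ in $C$ implies $f_\alpha(x)\preccurlyeq y$ for all $\alpha$. $\mathrm{ComFix}(\mathcal F)=\{x:f_\alpha(x)=x\ \forall\alpha\}$. A common upper (lower) bound of the sets $H_{t,\alpha}(C)$ is $w$ with $H_{t,\alpha}(x)\preccurlyeq w$ ($w\preccurlyeq H_{t,\alpha}(x)$) for all $x\in C$, $\alpha\in\mathcal I$. A minimal (maximal) element of $A$ is $w\in A$ with no $u\in A$ such that $u\prec w$ ($w\prec u$). *)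

theory Defs
  imports "HOL-Analysis.Analysis"
begin

text \<open>The carrier X is the whole (nonempty) type 'a.\<close>

definition b_metric :: "real \<Rightarrow> ('a \<Rightarrow> 'a \<Rightarrow> real) \<Rightarrow> bool" where
  "b_metric s d \<longleftrightarrow> s \<ge> 1 \<and>
     (\<forall>x y. d x y \<ge> 0) \<and>
     (\<forall>x y. d x y = 0 \<longleftrightarrow> x = y) \<and>
     (\<forall>x y. d x y = d y x) \<and>
     (\<forall>x y z. d x y \<le> s * (d x z + d z y))"

definition preorder_rel :: "('a \<Rightarrow> 'a \<Rightarrow> bool) \<Rightarrow> bool" where
  "preorder_rel le \<longleftrightarrow> (\<forall>x. le x x) \<and> (\<forall>x y z. le x y \<longrightarrow> le y z \<longrightarrow> le x z)"

definition strict_rel :: "('a \<Rightarrow> 'a \<Rightarrow> bool) \<Rightarrow> 'a \<Rightarrow> 'a \<Rightarrow> bool" where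
  "strict_rel le x y \<longleftrightarrow> le x y \<and> x \<noteq> y"

definition preordered_s_regular_bms ::
  "real \<Rightarrow> ('a \<Rightarrow> 'a \<Rightarrow> real) \<Rightarrow> ('a \<Rightarrow> 'a \<Rightarrow> bool) \<Rightarrow> bool" where
  "preordered_s_regular_bms s d le \<longleftrightarrow> b_metric s d \<and> preorder_rel le \<and>
     (\<forall>x y z. le x y \<longrightarrow> le y z \<longrightarrow> max (d x y) (d y z) \<le> s\<^sup>2 * d x z)"

definition is_chain :: "('a \<Rightarrow> 'a \<Rightarrow> bool) \<Rightarrow> 'a set \<Rightarrow> bool" where
  "is_chain le C \<longleftrightarrow> (\<forall>x\<in>C. \<forall>y\<in>C. le x y \<or> le y x)"

definition concordantly_isotone ::
  "('a \<Rightarrow> 'a \<Rightarrow> bool) \<Rightarrow> 'i set \<Rightarrow> ('i \<Rightarrow> 'a \<Rightarrow> 'a) \<Rightarrow> bool" where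
  "concordantly_isotone le I F \<longleftrightarrow>
     (\<forall>x y. strict_rel le x y \<longrightarrow> (\<forall>\<alpha>\<in>I. \<forall>\<beta>\<in>I. le (F \<alpha> x) (F \<beta> y)))"

definition O_X :: "('a \<Rightarrow> 'a \<Rightarrow> bool) \<Rightarrow> 'a \<Rightarrow> 'a set" where
  "O_X le x0 = {x. le x x0}"

definition O_X_star :: "('a \<Rightarrow> 'a \<Rightarrow> bool) \<Rightarrow> 'a \<Rightarrow> 'a set" where
  "O_X_star le x0 = {x. le x0 x}"

definition C1 :: "('a \<Rightarrow> 'a \<Rightarrow> bool) \<Rightarrow> 'i set \<Rightarrow> ('i \<Rightarrow> 'a \<Rightarrow> 'a) \<Rightarrow> 'a set set" where
  "C1 le I F = {C. is_chain le C \<and> C \<subseteq> (\<Union>\<alpha>\<in>I. range (F \<alpha>)) \<and>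
     (\<forall>x\<in>C. \<forall>\<alpha>\<in>I. le (F \<alpha> x) x) \<and>
     (\<forall>x\<in>C. \<forall>y\<in>C. strict_rel le x y \<longrightarrow> (\<forall>\<alpha>\<in>I. le x (F \<alpha> y)))}"

definition C1_star :: "('a \<Rightarrow> 'a \<Rightarrow> bool) \<Rightarrow> 'i set \<Rightarrow> ('i \<Rightarrow> 'a \<Rightarrow> 'a) \<Rightarrow> 'a set set" where
  "C1_star le I F = {C. is_chain le C \<and> C \<subseteq> (\<Union>\<alpha>\<in>I. range (F \<alpha>)) \<and>
     (\<forall>x\<in>C. \<forall>\<alpha>\<in>I. le x (F \<alpha> x)) \<and>
     (\<forall>x\<in>C. \<forall>y\<in>C. strict_rel le x y \<longrightarrow> (\<forall>\<alpha>\<in>I. le (F \<alpha> x) y))}"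

definition ComFix :: "'i set \<Rightarrow> ('i \<Rightarrow> 'a \<Rightarrow> 'a) \<Rightarrow> 'a set" where
  "ComFix I F = {x. \<forall>\<alpha>\<in>I. F \<alpha> x = x}"

definition maximal_elem :: "('a \<Rightarrow> 'a \<Rightarrow> bool) \<Rightarrow> 'a set \<Rightarrow> 'a \<Rightarrow> bool" where
  "maximal_elem le A w \<longleftrightarrow> w \<in> A \<and> \<not> (\<exists>u\<in>A. strict_rel le w u)"

definition minimal_elem :: "('a \<Rightarrow> 'a \<Rightarrow> bool) \<Rightarrow> 'a set \<Rightarrow> 'a \<Rightarrow> bool" where
  "minimal_elem le A w \<longleftrightarrow> w \<in> A \<and> \<not> (\<exists>u\<in>A. strict_rel le u w)"

end

theory Submission
  imports Defs
begin

text \<open>The fence is built one point at a time. For odd \<open>t\<close>, Zorn's lemma is applied to the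
  common fixed points of \<open>\<H>\<^sub>t\<close> above \<open>x\<^sub>t\<^sub>-\<^sub>1\<close>: a chain of common fixed points lies in
  \<open>\<C>\<^sup>*\<^sub>1(\<H>\<^sub>t)\<close>, so hypothesis (ii) bounds it by some \<open>w\<close>; the orbit of \<open>w\<close> is ascending by
  isotonicity, and \<open>s\<close>-regularity turns \<open>d(H\<^sup>i w, H\<^sup>i\<^sub>\<beta> z) \<longrightarrow> 0\<close> into \<open>w = H w\<close>, so the bound is
  again a common fixed point. Regularity also makes the preorder antisymmetric, as Zorn's lemma
  requires. Even steps are the same argument for the reversed preorder.\<close>

definition attracting_upper_bounds ::
  "('a \<Rightarrow> 'a \<Rightarrow> real) \<Rightarrow> ('a \<Rightarrow> 'a \<Rightarrow> bool) \<Rightarrow> 'i set \<Rightarrow> ('i \<Rightarrow> 'a \<Rightarrow> 'a) \<Rightarrow> bool" where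
  "attracting_upper_bounds d le I F \<longleftrightarrow>
     (\<forall>C\<in>C1_star le I F. \<exists>w.
        (\<forall>x\<in>C. \<forall>\<alpha>\<in>I. le (F \<alpha> x) w) \<and>
        (\<exists>z. \<exists>\<beta>\<in>I. \<forall>\<alpha>\<in>I.
           (\<forall>i::nat. le w (F \<alpha> w) \<and> le ((F \<beta> ^^ i) z) w) \<and>
           (\<lambda>i. d ((F \<alpha> ^^ i) w) ((F \<beta> ^^ i) z)) \<longlonglongrightarrow> 0))"

definition attracting_lower_bounds ::
  "('a \<Rightarrow> 'a \<Rightarrow> real) \<Rightarrow> ('a \<Rightarrow> 'a \<Rightarrow> bool) \<Rightarrow> 'i set \<Rightarrow> ('i \<Rightarrow> 'a \<Rightarrow> 'a) \<Rightarrow> bool" where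
  "attracting_lower_bounds d le I F \<longleftrightarrow>
     (\<forall>C\<in>C1 le I F. \<exists>w'.
        (\<forall>x\<in>C. \<forall>\<alpha>\<in>I. le w' (F \<alpha> x)) \<and>
        (\<exists>z'. \<exists>\<gamma>\<in>I. \<forall>\<alpha>\<in>I.
           (\<forall>i::nat. le (F \<alpha> w') w' \<and> le w' ((F \<gamma> ^^ i) z')) \<and>
           (\<lambda>i. d ((F \<alpha> ^^ i) w') ((F \<gamma> ^^ i) z')) \<longlonglongrightarrow> 0))"

locale regular_bms =
  fixes s :: real and d :: "'a \<Rightarrow> 'a \<Rightarrow> real" and le :: "'a \<Rightarrow> 'a \<Rightarrow> bool"
  assumes space: "preordered_s_regular_bms s d le"
begin

lemma refl_le: "le x x"
  using space unfolding preordered_s_regular_bms_def preorder_rel_def by simp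

lemma trans_le: "le x y \<Longrightarrow> le y z \<Longrightarrow> le x z"
  using space unfolding preordered_s_regular_bms_def preorder_rel_def by blast

lemma d_nonneg: "0 \<le> d x y"
  and d_eq_0_iff: "d x y = 0 \<longleftrightarrow> x = y"
  and d_sym: "d x y = d y x"
  using space unfolding preordered_s_regular_bms_def b_metric_def by simp_all

lemma d_regular: "le x y \<Longrightarrow> le y z \<Longrightarrow> max (d x y) (d y z) \<le> s\<^sup>2 * d x z"
  using space unfolding preordered_s_regular_bms_def by blast

lemma antisym_le:
  assumes "le x y" and "le y x"
  shows "x = y"
proof -
  have "d x y \<le> s\<^sup>2 * d x x"
    using d_regular[OF assms] by simp
  then show ?thesis
    using d_nonneg[of x y] d_eq_0_iff[of x x] d_eq_0_iff[of x y] by simp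
qed

lemma le_chain_mono:
  assumes "\<And>i. le (a i) (a (Suc i))" and "i \<le> j"
  shows "le (a i) (a j)"
  using assms(2) by (induction j rule: dec_induct) (auto intro: refl_le trans_le[OF _ assms(1)])

text \<open>Regularity transports the decay of \<open>d (a i) (b i)\<close> back to the start:
  \<open>b i \<preccurlyeq> a 0 \<preccurlyeq> a k \<preccurlyeq> a i\<close> gives \<open>d (a 0) (a k) \<le> s\<^sup>4 d (b i) (a i)\<close> for all \<open>i \<ge> k\<close>.\<close>
lemma ascending_seq_const_if_approached_from_below:
  assumes asc: "\<And>i. le (a i) (a (Suc i))"
    and below: "\<And>i. le (b i) (a 0)"
    and lim: "(\<lambda>i. d (a i) (b i)) \<longlonglongrightarrow> 0"
  shows "a k = a 0"
proof -
  have bound: "d (a 0) (a k) \<le> s\<^sup>2 * (s\<^sup>2 * d (a i) (b i))" if "k \<le> i" for i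
  proof -
    have "d (a 0) (a k) \<le> s\<^sup>2 * d (a 0) (a i)"
      using d_regular[OF le_chain_mono[of a, OF asc, of 0 k] le_chain_mono[of a, OF asc that]] by simp
    moreover have "d (a 0) (a i) \<le> s\<^sup>2 * d (b i) (a i)"
      using d_regular[OF below le_chain_mono[of a, OF asc, of 0 i]] by simp
    then have "s\<^sup>2 * d (a 0) (a i) \<le> s\<^sup>2 * (s\<^sup>2 * d (a i) (b i))"
      by (intro mult_left_mono) (simp_all add: d_sym)
    ultimately show ?thesis
      by (rule order_trans)
  qed
  have "(\<lambda>i. s\<^sup>2 * (s\<^sup>2 * d (a i) (b i))) \<longlonglongrightarrow> 0"
    by (intro tendsto_mult_right_zero lim)
  then have "d (a 0) (a k) \<le> 0"
    using bound by (intro LIMSEQ_le_const) blast+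
  then show ?thesis
    using d_nonneg[of "a 0" "a k"] d_eq_0_iff by simp
qed

lemma isotone_le:
  assumes "concordantly_isotone le I F" and "\<alpha> \<in> I" and "le x y"
  shows "le (F \<alpha> x) (F \<alpha> y)"
  using assms refl_le unfolding concordantly_isotone_def strict_rel_def by (cases "x = y") auto

lemma isotone_orbit_ascending:
  assumes "concordantly_isotone le I F" and "\<alpha> \<in> I" and "le w (F \<alpha> w)"
  shows "le ((F \<alpha> ^^ i) w) ((F \<alpha> ^^ Suc i) w)"
proof (induction i)
  case 0
  then show ?case using assms(3) by simp
next
  case (Suc i)
  then show ?case using isotone_le[OF assms(1,2) Suc.IH] by simp
qed

lemma fixpoint_if_orbit_approached_from_below:
  assumes iso: "concordantly_isotone le I F" and "\<alpha> \<in> I"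
    and up: "le w (F \<alpha> w)" and below: "\<And>i. le (b i) w"
    and lim: "(\<lambda>i. d ((F \<alpha> ^^ i) w) (b i)) \<longlonglongrightarrow> 0"
  shows "F \<alpha> w = w"
  using ascending_seq_const_if_approached_from_below[of "\<lambda>i. (F \<alpha> ^^ i) w" b 1]
    isotone_orbit_ascending[OF assms(1-3)] below lim by simp

lemma C1_star_bounded_by_common_fixpoint:
  assumes iso: "concordantly_isotone le I F" and bounds: "attracting_upper_bounds d le I F"
    and "C \<in> C1_star le I F"
  shows "\<exists>w\<in>ComFix I F. \<forall>x\<in>C. \<forall>\<alpha>\<in>I. le (F \<alpha> x) w"
proof -
  obtain w z \<beta> where ub: "\<forall>x\<in>C. \<forall>\<alpha>\<in>I. le (F \<alpha> x) w"
    and approx: "\<forall>\<alpha>\<in>I. (\<forall>i. le w (F \<alpha> w) \<and> le ((F \<beta> ^^ i) z) w) \<and>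
              (\<lambda>i. d ((F \<alpha> ^^ i) w) ((F \<beta> ^^ i) z)) \<longlonglongrightarrow> 0"
    using bounds assms(3) unfolding attracting_upper_bounds_def by blast
  have "F \<alpha> w = w" if "\<alpha> \<in> I" for \<alpha>
    using fixpoint_if_orbit_approached_from_below[OF iso that, of w "\<lambda>i. (F \<beta> ^^ i) z"]
      approx that by blast
  then show ?thesis
    using ub unfolding ComFix_def by blast
qed

lemma ComFix_chain_in_C1_star:
  assumes "I \<noteq> {}" and "D \<subseteq> ComFix I F" and "is_chain le D"
  shows "D \<in> C1_star le I F"
proof -
  have fixed: "F \<alpha> x = x" if "x \<in> D" and "\<alpha> \<in> I" for x \<alpha>
    using assms(2) that unfolding ComFix_def by blast
  obtain \<alpha> where "\<alpha> \<in> I" using assms(1) by blast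
  then have "D \<subseteq> range (F \<alpha>)"
    using fixed by (metis rangeI subsetI)
  then have "D \<subseteq> (\<Union>\<alpha>\<in>I. range (F \<alpha>))"
    using \<open>\<alpha> \<in> I\<close> by blast
  then show ?thesis
    using assms(3) fixed refl_le unfolding C1_star_def strict_rel_def by simp
qed

lemma singleton_image_in_C1_star:
  assumes iso: "concordantly_isotone le I F" and "\<alpha>\<^sub>0 \<in> I" and p: "\<forall>\<alpha>\<in>I. le p (F \<alpha> p)"
  shows "{F \<alpha>\<^sub>0 p} \<in> C1_star le I F"
proof -
  have "le (F \<alpha>\<^sub>0 p) (F \<alpha> (F \<alpha>\<^sub>0 p))" if "\<alpha> \<in> I" for \<alpha>
  proof (cases "F \<alpha>\<^sub>0 p = p")
    case True
    then show ?thesis using p that by simp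
  next
    case False
    then have "strict_rel le p (F \<alpha>\<^sub>0 p)"
      using p assms(2) by (simp add: strict_rel_def)
    then show ?thesis
      using iso assms(2) that unfolding concordantly_isotone_def by blast
  qed
  moreover have "F \<alpha>\<^sub>0 p \<in> (\<Union>\<alpha>\<in>I. range (F \<alpha>))"
    using assms(2) by blast
  ultimately show ?thesis
    using refl_le unfolding C1_star_def is_chain_def strict_rel_def by simp
qed

lemma ComFix_chain_bounded_by_common_fixpoint:
  assumes "I \<noteq> {}" and iso: "concordantly_isotone le I F"
    and bounds: "attracting_upper_bounds d le I F"
    and "D \<subseteq> ComFix I F" and "is_chain le D"
  shows "\<exists>w\<in>ComFix I F. \<forall>x\<in>D. le x w"
proof -
  obtain \<alpha>\<^sub>0 where "\<alpha>\<^sub>0 \<in> I" using assms(1) by blast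
  have "D \<in> C1_star le I F"
    by (rule ComFix_chain_in_C1_star[OF assms(1,4,5)])
  then obtain w where w: "w \<in> ComFix I F" and w_ub: "\<forall>x\<in>D. \<forall>\<alpha>\<in>I. le (F \<alpha> x) w"
    using C1_star_bounded_by_common_fixpoint[OF iso bounds] by blast
  have "le x w" if "x \<in> D" for x
  proof -
    have "F \<alpha>\<^sub>0 x = x"
      using assms(4) that \<open>\<alpha>\<^sub>0 \<in> I\<close> unfolding ComFix_def by blast
    then show ?thesis
      using w_ub that \<open>\<alpha>\<^sub>0 \<in> I\<close> by metis
  qed
  then show ?thesis using w by blast
qed

lemma ex_common_fixpoint_above:
  assumes "I \<noteq> {}" and iso: "concordantly_isotone le I F"
    and bounds: "attracting_upper_bounds d le I F" and p: "\<forall>\<alpha>\<in>I. le p (F \<alpha> p)"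
  shows "\<exists>w\<in>ComFix I F. le p w"
proof -
  obtain \<alpha>\<^sub>0 where "\<alpha>\<^sub>0 \<in> I" using assms(1) by blast
  have "le p (F \<alpha>\<^sub>0 p)"
    using p \<open>\<alpha>\<^sub>0 \<in> I\<close> by blast
  have "{F \<alpha>\<^sub>0 p} \<in> C1_star le I F"
    by (rule singleton_image_in_C1_star[OF iso \<open>\<alpha>\<^sub>0 \<in> I\<close> p])
  then obtain w where "w \<in> ComFix I F" and "le (F \<alpha>\<^sub>0 (F \<alpha>\<^sub>0 p)) w"
    using C1_star_bounded_by_common_fixpoint[OF iso bounds] \<open>\<alpha>\<^sub>0 \<in> I\<close> by blast
  moreover have "le (F \<alpha>\<^sub>0 p) (F \<alpha>\<^sub>0 (F \<alpha>\<^sub>0 p))"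
    using isotone_le[OF iso \<open>\<alpha>\<^sub>0 \<in> I\<close> \<open>le p (F \<alpha>\<^sub>0 p)\<close>] .
  ultimately show ?thesis
    using \<open>le p (F \<alpha>\<^sub>0 p)\<close> by (meson trans_le)
qed

lemma maximal_common_fixpoint_above:
  assumes "I \<noteq> {}" and iso: "concordantly_isotone le I F"
    and bounds: "attracting_upper_bounds d le I F" and p: "\<forall>\<alpha>\<in>I. le p (F \<alpha> p)"
  shows "\<exists>x. maximal_elem le (ComFix I F \<inter> O_X_star le p) x"
proof -
  define A where "A = ComFix I F \<inter> O_X_star le p"
  have "partial_order_on A (relation_of le A)"
    by (rule partial_order_on_relation_ofI) (metis refl_le, metis trans_le, metis antisym_le)
  moreover have "\<exists>u\<in>A. \<forall>x\<in>D. le x u" if D: "D \<in> Chains (relation_of le A)" for D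
  proof (cases "D = {}")
    case True
    obtain w where "w \<in> ComFix I F" and "le p w"
      using ex_common_fixpoint_above[OF assms] by blast
    then show ?thesis unfolding True A_def O_X_star_def by blast
  next
    case False
    have "D \<subseteq> A" using Chains_relation_of[OF D] .
    then have "D \<subseteq> ComFix I F" unfolding A_def by blast
    moreover have "is_chain le D"
      using D unfolding Chains_def relation_of_def is_chain_def by blast
    ultimately obtain w where w: "w \<in> ComFix I F" and ub: "\<forall>x\<in>D. le x w"
      using ComFix_chain_bounded_by_common_fixpoint[OF assms(1-3)] by blast
    obtain x where "x \<in> D" using False by blast
    then have "le p x"
      using \<open>D \<subseteq> A\<close> unfolding A_def O_X_star_def by blast
    then have "le p w"
      using trans_le ub \<open>x \<in> D\<close> by blast
    then show ?thesis
      using ub w unfolding A_def O_X_star_def by blast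
  qed
  ultimately obtain m where "m \<in> A" and "\<forall>x\<in>A. le m x \<longrightarrow> x = m"
    using predicate_Zorn[of A le] by blast
  then show ?thesis
    unfolding maximal_elem_def strict_rel_def A_def by blast
qed

end

lemma concordantly_isotone_converse:
  "concordantly_isotone le I F \<Longrightarrow> concordantly_isotone (\<lambda>x y. le y x) I F"
  unfolding concordantly_isotone_def strict_rel_def by (metis (no_types))

lemma C1_eq_C1_star_converse: "C1 le I F = C1_star (\<lambda>x y. le y x) I F"
  unfolding C1_def C1_star_def is_chain_def strict_rel_def by (auto simp: eq_commute)

lemma minimal_elem_eq_maximal_elem_converse:
  "minimal_elem le A w = maximal_elem (\<lambda>x y. le y x) A w"
  unfolding minimal_elem_def maximal_elem_def strict_rel_def by blast

lemma O_X_eq_O_X_star_converse: "O_X le p = O_X_star (\<lambda>x y. le y x) p"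
  unfolding O_X_def O_X_star_def by simp

lemma attracting_lower_bounds_eq_upper_converse:
  "attracting_lower_bounds d le I F = attracting_upper_bounds d (\<lambda>x y. le y x) I F"
  unfolding attracting_lower_bounds_def attracting_upper_bounds_def C1_eq_C1_star_converse by simp

lemma (in regular_bms) regular_bms_converse: "regular_bms s d (\<lambda>x y. le y x)"
proof unfold_locales
  have "b_metric s d"
    using space unfolding preordered_s_regular_bms_def by simp
  moreover have "preorder_rel (\<lambda>x y. le y x)"
    unfolding preorder_rel_def using refl_le trans_le by blast
  moreover have "max (d x y) (d y z) \<le> s\<^sup>2 * d x z" if "le y x" "le z y" for x y z
    using d_regular[OF that(2,1)] by (simp add: d_sym max.commute)
  ultimately show "preordered_s_regular_bms s d (\<lambda>x y. le y x)"
    unfolding preordered_s_regular_bms_def by blast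
qed

lemma (in regular_bms) minimal_common_fixpoint_below:
  assumes "I \<noteq> {}" and iso: "concordantly_isotone le I F"
    and bounds: "attracting_lower_bounds d le I F" and p: "\<forall>\<alpha>\<in>I. le (F \<alpha> p) p"
  shows "\<exists>x. minimal_elem le (ComFix I F \<inter> O_X le p) x"
  using regular_bms.maximal_common_fixpoint_above[OF regular_bms_converse assms(1)
      concordantly_isotone_converse[OF iso] bounds[unfolded attracting_lower_bounds_eq_upper_converse]] p
  unfolding minimal_elem_eq_maximal_elem_converse O_X_eq_O_X_star_converse by blast

lemma finite_dependent_choice:
  assumes "Inv 0 x\<^sub>0"
    and step: "\<And>t y. t < n \<Longrightarrow> Inv t y \<Longrightarrow> \<exists>z. Inv (Suc t) z \<and> R t y z"
  shows "\<exists>x. x 0 = x\<^sub>0 \<and> (\<forall>t<n. R t (x t) (x (Suc t)))"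
proof -
  have "\<exists>x. \<forall>t. ((t = 0 \<longrightarrow> x t = x\<^sub>0) \<and> (t \<le> n \<longrightarrow> Inv t (x t))) \<and>
      (t < n \<longrightarrow> R t (x t) (x (Suc t)))"
  \<comment> \<open>beyond \<open>n\<close> the invariant is dropped, so every later step is trivially possible\<close>
  proof (rule dependent_nat_choice[where P = "\<lambda>t y. (t = 0 \<longrightarrow> y = x\<^sub>0) \<and> (t \<le> n \<longrightarrow> Inv t y)"
        and Q = "\<lambda>t y z. t < n \<longrightarrow> R t y z"])
    show "\<exists>y. (0 = (0::nat) \<longrightarrow> y = x\<^sub>0) \<and> (0 \<le> n \<longrightarrow> Inv 0 y)"
      using assms(1) by blast
  next
    fix y t
    assume "(t = 0 \<longrightarrow> y = x\<^sub>0) \<and> (t \<le> n \<longrightarrow> Inv t y)"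
    then show "\<exists>z. ((Suc t = 0 \<longrightarrow> z = x\<^sub>0) \<and> (Suc t \<le> n \<longrightarrow> Inv (Suc t) z)) \<and> (t < n \<longrightarrow> R t y z)"
      using step by (cases "t < n") auto
  qed
  then show ?thesis by blast
qed

definition fence_successor ::
  "('a \<Rightarrow> 'a \<Rightarrow> bool) \<Rightarrow> 'i set \<Rightarrow> nat \<Rightarrow> ('i \<Rightarrow> 'a \<Rightarrow> 'a) \<Rightarrow> 'a \<Rightarrow> 'a \<Rightarrow> bool" where
  "fence_successor le I t G y z \<longleftrightarrow> (if odd t
     then maximal_elem le (ComFix I G \<inter> O_X_star le y) z
     else minimal_elem le (ComFix I G \<inter> O_X le y) z)"

lemma fence_successor_ComFix: "fence_successor le I t G y z \<Longrightarrow> z \<in> ComFix I G"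
  unfolding fence_successor_def maximal_elem_def minimal_elem_def by (cases "odd t") simp_all

lemma fence_successor_le:
  "fence_successor le I t G y z \<Longrightarrow> (odd t \<longrightarrow> le y z) \<and> (even t \<longrightarrow> le z y)"
  unfolding fence_successor_def maximal_elem_def minimal_elem_def O_X_def O_X_star_def
  by (simp split: if_splits)

lemma (in regular_bms) fence_successor_exists:
  assumes "I \<noteq> {}" and iso: "concordantly_isotone le I G" and y: "y \<in> ComFix I F"
    and F_G: "\<forall>\<alpha>\<in>I. \<forall>x. (odd t \<longrightarrow> le (F \<alpha> x) (G \<alpha> x)) \<and> (even t \<longrightarrow> le (G \<alpha> x) (F \<alpha> x))"
    and odd_bounds: "odd t \<longrightarrow> attracting_upper_bounds d le I G"
    and even_bounds: "even t \<longrightarrow> attracting_lower_bounds d le I G"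
  shows "\<exists>z. fence_successor le I t G y z"
proof (cases "odd t")
  case True
  have "le y (G \<alpha> y)" if "\<alpha> \<in> I" for \<alpha>
  proof -
    have "le (F \<alpha> y) (G \<alpha> y)" using F_G that True by blast
    then show ?thesis using y that unfolding ComFix_def by simp
  qed
  then show ?thesis
    using maximal_common_fixpoint_above[OF assms(1) iso mp[OF odd_bounds True]] True
    unfolding fence_successor_def by simp
next
  case False
  have "le (G \<alpha> y) y" if "\<alpha> \<in> I" for \<alpha>
  proof -
    have "le (G \<alpha> y) (F \<alpha> y)" using F_G that False by blast
    then show ?thesis using y that unfolding ComFix_def by simp
  qed
  then show ?thesis
    using minimal_common_fixpoint_below[OF assms(1) iso mp[OF even_bounds]] False
    unfolding fence_successor_def by simp
qed

theorem theorem3p3: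
  fixes s :: real and d :: "'a \<Rightarrow> 'a \<Rightarrow> real" and le :: "'a \<Rightarrow> 'a \<Rightarrow> bool"
    and I :: "'i set" and f g :: "'i \<Rightarrow> 'a \<Rightarrow> 'a"
    and H :: "nat \<Rightarrow> 'i \<Rightarrow> 'a \<Rightarrow> 'a" and n :: nat and x0 :: 'a
  assumes space: "preordered_s_regular_bms s d le"
    and I_ne: "I \<noteq> {}"
    and H0: "\<forall>\<alpha>\<in>I. H 0 \<alpha> = f \<alpha>"
    and Hn: "\<forall>\<alpha>\<in>I. H n \<alpha> = g \<alpha>"
    and fence_H: "\<forall>\<alpha>\<in>I. \<forall>t<n. \<forall>x.
        (even t \<longrightarrow> le (H t \<alpha> x) (H (Suc t) \<alpha> x)) \<and>
        (odd t \<longrightarrow> le (H (Suc t) \<alpha> x) (H t \<alpha> x))"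
    and x0_fix: "x0 \<in> ComFix I f"
    and iso: "\<forall>t\<in>{1..n}. concordantly_isotone le I (H t)"
    and odd_cond: "\<forall>t\<in>{1..n}. odd t \<longrightarrow>
        (\<forall>C\<in>C1_star le I (H t). \<exists>w.
           (\<forall>x\<in>C. \<forall>\<alpha>\<in>I. le (H t \<alpha> x) w) \<and>
           (\<exists>z. \<exists>\<beta>\<in>I. \<forall>\<alpha>\<in>I.
              (\<forall>i::nat. le w (H t \<alpha> w) \<and> le ((H t \<beta> ^^ i) z) w) \<and>
              (\<lambda>i. d ((H t \<alpha> ^^ i) w) ((H t \<beta> ^^ i) z)) \<longlonglongrightarrow> 0))"
    and even_cond: "\<forall>t\<in>{1..n}. even t \<longrightarrow>
        (\<forall>C\<in>C1 le I (H t). \<exists>w'.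
           (\<forall>x\<in>C. \<forall>\<alpha>\<in>I. le w' (H t \<alpha> x)) \<and>
           (\<exists>z'. \<exists>\<gamma>\<in>I. \<forall>\<alpha>\<in>I.
              (\<forall>i::nat. le (H t \<alpha> w') w' \<and> le w' ((H t \<gamma> ^^ i) z')) \<and>
              (\<lambda>i. d ((H t \<alpha> ^^ i) w') ((H t \<gamma> ^^ i) z')) \<longlonglongrightarrow> 0))"
  shows "\<exists>x :: nat \<Rightarrow> 'a. x 0 = x0 \<and>
     (\<forall>t<n. (even t \<longrightarrow> le (x t) (x (Suc t))) \<and> (odd t \<longrightarrow> le (x (Suc t)) (x t))) \<and>
     (\<forall>t\<in>{1..n}. odd t \<longrightarrow>
        maximal_elem le (ComFix I (H t) \<inter> O_X_star le (x (t - 1))) (x t)) \<and>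
     (\<forall>t\<in>{1..n}. even t \<longrightarrow>
        minimal_elem le (ComFix I (H t) \<inter> O_X le (x (t - 1))) (x t))"
proof -
  interpret regular_bms s d le by (rule regular_bms.intro[OF space])
  have step: "\<exists>z. z \<in> ComFix I (H (Suc t)) \<and> fence_successor le I (Suc t) (H (Suc t)) y z"
    if "t < n" and y: "y \<in> ComFix I (H t)" for t y
  proof -
    have t: "Suc t \<in> {1..n}" using \<open>t < n\<close> by simp
    have "\<forall>\<alpha>\<in>I. \<forall>x. (odd (Suc t) \<longrightarrow> le (H t \<alpha> x) (H (Suc t) \<alpha> x)) \<and>
        (even (Suc t) \<longrightarrow> le (H (Suc t) \<alpha> x) (H t \<alpha> x))"
      using fence_H \<open>t < n\<close> by fastforce
    then obtain z where z: "fence_successor le I (Suc t) (H (Suc t)) y z"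
      using fence_successor_exists[OF I_ne bspec[OF iso t] y _
          bspec[OF odd_cond t, folded attracting_upper_bounds_def]
          bspec[OF even_cond t, folded attracting_lower_bounds_def]]
      by blast
    show ?thesis using fence_successor_ComFix[OF z] z by blast
  qed
  have "x0 \<in> ComFix I (H 0)"
    using x0_fix H0 unfolding ComFix_def by simp
  from finite_dependent_choice[where Inv = "\<lambda>t y. y \<in> ComFix I (H t)"
      and R = "\<lambda>t. fence_successor le I (Suc t) (H (Suc t))", OF this step]
  obtain x where "x 0 = x0"
    and steps: "\<forall>t<n. fence_successor le I (Suc t) (H (Suc t)) (x t) (x (Suc t))"
    by blast
  have fence: "(even t \<longrightarrow> le (x t) (x (Suc t))) \<and> (odd t \<longrightarrow> le (x (Suc t)) (x t))"
    if "t < n" for t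
    using fence_successor_le[OF steps[rule_format, OF that]] by simp
  have extremal: "(odd t \<longrightarrow> maximal_elem le (ComFix I (H t) \<inter> O_X_star le (x (t - 1))) (x t)) \<and>
      (even t \<longrightarrow> minimal_elem le (ComFix I (H t) \<inter> O_X le (x (t - 1))) (x t))"
    if t: "t \<in> {1..n}" for t
  proof -
    obtain u where "t = Suc u" and "u < n" by (cases t) (use t in auto)
    then show ?thesis using steps unfolding fence_successor_def by simp
  qed
  show ?thesis
    using \<open>x 0 = x0\<close> fence extremal by (intro exI[of _ x]) auto
qed

end
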